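(* Let $\mathbf{F}$ be a field of characteristic $3$, let $\lambda=(\lambda_1,\lambda_2)$ be a partition with $m=\lambda_1-\lambda_2$, and let $u\in\mathbf{N}_0$ with $\lambda_2\ge 2\cdot3^u$. Let $m_u$ denote the $u$-th base-3 digit of $m$. Then in $S_\mathbf{F}(\lambda)$: \[b(3^u)^2=b(3^u)\Big[\tbinom{m_u+2}{1}+\psi_{m,u}\Big]+b(2\cdot3^u),\] \[b(2\cdot3^u)^2=b(2\cdot3^u)\Big[\tbinom{m_u+1}{2}+\tbinom{m_u+1}{1}\psi_{m,u}\Big],\] \[b(3^u)b(2\cdot3^u)=b(2\cdot3^u)\Big[2\tbinom{m_u}{1}-\psi_{m,u}\Big],\] where integer coefficients are read in $\mathbf{F}$.
   Context: $S_\mathbf{F}(\lambda)=\operatorname{End}_{\mathbf{F}S_r}(M^\lambda)$ is a commutative $\mathbf{F}$-algebra with basis $b(0)=\mathbf{1},\dots,b(\lambda_2)$ and multiplication $b(i)b(j)=\sum_{h=\max\{i,j\}}^{i+j}\binom{h}{i}\binom{h}{j}\binom{m+i+j}{i+j-h}b(h)$, $b(a)=0$ for $a>\lambda_2$. For $m=\sum_u m_u3^u$ in base 3, $m_{<u}=\sum_{s<u}m_s3^s$, and \[\psi_{m,u}=\sum_{k=1}^{3^u-1}\binom{m_{<u}}{3^u-k}b(k)\in S_\mathbf{F}(\lambda).\] *)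

theory Defs
  imports Main
begin

text \<open>Model of S_F(lambda): elements are coefficient vectors c :: nat => 'a
  representing sum_{i <= l2} c i * b(i), where l2 = lambda_2 (coefficients at
  indices > l2 are ignored/zero). m = lambda_1 - lambda_2.\<close>

definition sc_coef :: "nat \<Rightarrow> nat \<Rightarrow> nat \<Rightarrow> nat \<Rightarrow> nat" where
  "sc_coef m i j h =
     (if max i j \<le> h \<and> h \<le> i + j
      then (h choose i) * (h choose j) * ((m + i + j) choose (i + j - h)) else 0)"

definition sb :: "nat \<Rightarrow> nat \<Rightarrow> nat \<Rightarrow> 'a::field" where
  "sb l2 a = (\<lambda>k. if k = a \<and> a \<le> l2 then 1 else 0)"

definition sadd :: "(nat \<Rightarrow> 'a::field) \<Rightarrow> (nat \<Rightarrow> 'a) \<Rightarrow> nat \<Rightarrow> 'a" where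
  "sadd x y = (\<lambda>k. x k + y k)"

definition ssub :: "(nat \<Rightarrow> 'a::field) \<Rightarrow> (nat \<Rightarrow> 'a) \<Rightarrow> nat \<Rightarrow> 'a" where
  "ssub x y = (\<lambda>k. x k - y k)"

definition ssmult :: "'a::field \<Rightarrow> (nat \<Rightarrow> 'a) \<Rightarrow> nat \<Rightarrow> 'a" where
  "ssmult c x = (\<lambda>k. c * x k)"

text \<open>bilinear extension of b(i)b(j) = sum_h sc_coef m i j h b(h), truncated at l2\<close>
definition smul :: "nat \<Rightarrow> nat \<Rightarrow> (nat \<Rightarrow> 'a::field) \<Rightarrow> (nat \<Rightarrow> 'a) \<Rightarrow> nat \<Rightarrow> 'a" where
  "smul m l2 x y = (\<lambda>h. if h \<le> l2
       then (\<Sum>i\<le>l2. \<Sum>j\<le>l2. x i * y j * of_nat (sc_coef m i j h)) else 0)"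

definition sone :: "nat \<Rightarrow> nat \<Rightarrow> 'a::field" where
  "sone l2 = sb l2 0"

text \<open>m_{<u} = sum_{s<u} m_s 3^s = m mod 3^u; m_u = u-th base-3 digit\<close>
definition mlow :: "nat \<Rightarrow> nat \<Rightarrow> nat" where
  "mlow m u = m mod 3 ^ u"

definition digit3 :: "nat \<Rightarrow> nat \<Rightarrow> nat" where
  "digit3 m u = m div 3 ^ u mod 3"

definition psi :: "nat \<Rightarrow> nat \<Rightarrow> nat \<Rightarrow> nat \<Rightarrow> 'a::field" where
  "psi m u l2 = (\<lambda>k. \<Sum>t\<in>{1..3 ^ u - 1}. of_nat (mlow m u choose (3 ^ u - t)) * sb l2 t k)"

end

theory Submission
  imports Defs "HOL-Computational_Algebra.Primes"
begin

text \<open>Write indices in base $3^u$ as $h = r + 3^u q$ with $r < 3^u$. In characteristic 3,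
  Lucas' theorem splits every binomial coefficient in the structure constants of
  $b(3^u a)\,b(3^u b)$ into a low factor depending only on $r$ and $m_{<u} = m \bmod 3^u$ and
  a high factor depending only on $q$ and $m \mathbin{div} 3^u$. On the other side,
  $b(3^u k)\,(c + d\,\psi_{m,u})$ is supported on the single block $q = k$, where $\psi_{m,u}$
  produces exactly that low factor. Hence both sides of each identity can be compared block
  by block; only $q \le 4$ contributes, and there the high factors are binomial coefficients
  $\binom{m \mathbin{div} 3^u + j}{i}$ with $i < 3$, which modulo 3 depend only on the digit
  $m_u$.\<close>

lemma of_nat_mod_CHAR: "(of_nat (n mod CHAR('a)) :: 'a::semiring_1) = of_nat n"
proof -
  have "(of_nat n :: 'a) = of_nat (n mod CHAR('a) + CHAR('a) * (n div CHAR('a)))"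
    by (simp only: mod_mult_div_eq)
  then show ?thesis
    by (simp only: of_nat_add of_nat_mult of_nat_CHAR mult_zero_left add_0_right)
qed

lemma prime_dvd_choose_prime_power:
  assumes "prime p" "0 < k" "k < p ^ u"
  shows "p dvd (p ^ u choose k)"
proof (rule ccontr)
  assume "\<not> p dvd (p ^ u choose k)"
  then have "coprime (p ^ u) (p ^ u choose k)"
    using assms(1) by (simp add: prime_imp_coprime)
  moreover obtain j where "k = Suc j"
    using assms(2) by (cases k) auto
  then have "p ^ u dvd k * (p ^ u choose k)"
    by (metis binomial_absorption dvd_triv_left)
  ultimately have "p ^ u dvd k"
    by (simp add: coprime_dvd_mult_left_iff)
  with assms(2,3) show False
    by (simp add: nat_dvd_not_less)
qed

lemma of_nat_choose_prime_power_eq_0: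
  assumes "CHAR('a::semiring_1) = p" "prime p" "0 < k" "k \<noteq> p ^ u"
  shows "(of_nat (p ^ u choose k) :: 'a) = 0"
proof (cases "k < p ^ u")
  case True
  then show ?thesis
    using prime_dvd_choose_prime_power[OF assms(2,3) True] assms(1)
    by (simp add: of_nat_eq_0_iff_char_dvd)
qed (use assms(4) in \<open>simp add: binomial_eq_0\<close>)

lemma of_nat_choose_add_prime_power:
  assumes "CHAR('a::semiring_1) = p" "prime p"
  shows "(of_nat ((x + p ^ u) choose y) :: 'a) =
    of_nat (x choose y) + (if p ^ u \<le> y then of_nat (x choose (y - p ^ u)) else 0)"
proof -
  have "(of_nat ((x + p ^ u) choose y) :: 'a) =
      (\<Sum>k\<le>y. of_nat (p ^ u choose k) * of_nat (x choose (y - k)))"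
    by (simp flip: vandermonde add: add.commute[of x])
  also have "\<dots> = (\<Sum>k\<in>{0} \<union> ({p ^ u} \<inter> {..y}). of_nat (p ^ u choose k) * of_nat (x choose (y - k)))"
  proof (rule sum.mono_neutral_right)
    show "\<forall>k\<in>{..y} - ({0} \<union> ({p ^ u} \<inter> {..y})).
        (of_nat (p ^ u choose k) :: 'a) * of_nat (x choose (y - k)) = 0"
    proof
      fix k assume "k \<in> {..y} - ({0} \<union> ({p ^ u} \<inter> {..y}))"
      then have "0 < k" "k \<noteq> p ^ u"
        by auto
      then show "(of_nat (p ^ u choose k) :: 'a) * of_nat (x choose (y - k)) = 0"
        by (simp add: of_nat_choose_prime_power_eq_0[OF assms])
    qed
  qed auto
  also have "\<dots> = of_nat (x choose y) + (if p ^ u \<le> y then of_nat (x choose (y - p ^ u)) else 0)"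
    using prime_gt_0_nat[OF assms(2)] by (subst sum.union_disjoint) auto
  finally show ?thesis .
qed

lemma of_nat_choose_lucas:
  assumes "CHAR('a::semiring_1) = p" "prime p" "a < p ^ u" "b < p ^ u"
  shows "(of_nat ((a + p ^ u * n) choose (b + p ^ u * j)) :: 'a) =
    of_nat (a choose b) * of_nat (n choose j)"
proof (induction n arbitrary: j)
  case 0
  show ?case
  proof (cases j)
    case (Suc i)
    have "a < b + p ^ u * j"
      using assms(3) Suc by (simp add: trans_less_add2)
    then show ?thesis
      using Suc by (simp add: binomial_eq_0)
  qed simp
next
  case (Suc n)
  have split: "a + p ^ u * Suc n = (a + p ^ u * n) + p ^ u"
    by simp
  show ?case
  proof (cases j)
    case 0
    then show ?thesis
      using Suc.IH[of 0] assms(4)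
      unfolding split of_nat_choose_add_prime_power[OF assms(1,2)] by simp
  next
    case (Suc i)
    have "b + p ^ u * j - p ^ u = b + p ^ u * i"
      using Suc by simp
    then show ?thesis
      using Suc Suc.IH[of j] Suc.IH[of i]
      unfolding split of_nat_choose_add_prime_power[OF assms(1,2)] by (simp add: distrib_left add_ac)
  qed
qed

lemma of_nat_choose_mod_CHAR:
  assumes "CHAR('a::semiring_1) = p" "prime p" "k < p"
  shows "(of_nat (n choose k) :: 'a) = of_nat ((n mod p) choose k)"
  using of_nat_choose_lucas[OF assms(1,2), of "n mod p" 1 k "n div p" 0] assms(3)
  by (simp add: prime_gt_0_nat)

lemma of_nat_sc_coef_low:
  assumes "CHAR('a::semiring_1) = p" "prime p" "t < p ^ u"
  shows "(of_nat (sc_coef m (p ^ u * k) t h) :: 'a) = (if h = p ^ u * k + t then 1 else 0)"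
proof (cases "max (p ^ u * k) t \<le> h \<and> h \<le> p ^ u * k + t")
  case True
  then obtain r where r: "h = r + p ^ u * k" "r \<le> t"
    by (metis add.commute le_add_diff_inverse max.bounded_iff nat_add_left_cancel_le)
  then have "r < p ^ u"
    using assms(3) by simp
  note lucas = of_nat_choose_lucas[OF assms(1,2) this]
  have "(of_nat (h choose (p ^ u * k)) :: 'a) = 1"
    using lucas[of 0 k k] r prime_gt_0_nat[OF assms(2)] by simp
  moreover have "(of_nat (h choose t) :: 'a) = of_nat (r choose t)"
    using lucas[OF assms(3), of k 0] r by simp
  moreover have "r < t \<Longrightarrow> (of_nat (r choose t) :: 'a) = 0"
    by (simp add: binomial_eq_0)
  ultimately show ?thesis
    using r unfolding sc_coef_def by (cases "r = t") (auto simp: add.commute)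
qed (auto simp: sc_coef_def)

lemma of_nat_sc_coef_blocks_in_range:
  assumes "CHAR('a::semiring_1) = p" "prime p" "r < p ^ u"
    and "max (p ^ u * a) (p ^ u * b) \<le> r + p ^ u * q" "r + p ^ u * q \<le> p ^ u * a + p ^ u * b"
  shows "(of_nat (sc_coef m (p ^ u * a) (p ^ u * b) (r + p ^ u * q)) :: 'a) =
    of_nat (q choose a) * of_nat (q choose b) *
    (if r = 0 then of_nat ((m div p ^ u + a + b) choose (a + b - q))
     else of_nat (m mod p ^ u choose (p ^ u - r)) * of_nat ((m div p ^ u + a + b) choose (a + b - q - 1)))"
proof -
  define U where "U = p ^ u"
  have "0 < U"
    using prime_gt_0_nat[OF assms(2)] unfolding U_def by simp
  have "r < U" "m mod U < U"
    using assms(3) \<open>0 < U\<close> unfolding U_def by simp_all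
  note lucas = of_nat_choose_lucas[OF assms(1,2), of _ u, folded U_def]
  have top: "m + U * a + U * b = m mod U + U * (m div U + a + b)"
    by (simp add: algebra_simps)
  have "(of_nat (sc_coef m (U * a) (U * b) (r + U * q)) :: 'a) =
      of_nat (q choose a) * of_nat (q choose b) *
      of_nat ((m mod U + U * (m div U + a + b)) choose (U * a + U * b - (r + U * q)))"
    using assms(4,5) lucas[OF \<open>r < U\<close> \<open>0 < U\<close>, of q a] lucas[OF \<open>r < U\<close> \<open>0 < U\<close>, of q b]
    unfolding sc_coef_def top U_def[symmetric] by simp
  also have "\<dots> = of_nat (q choose a) * of_nat (q choose b) *
    (if r = 0 then of_nat ((m div U + a + b) choose (a + b - q))
     else of_nat (m mod U choose (U - r)) * of_nat ((m div U + a + b) choose (a + b - q - 1)))"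
  proof (cases "r = 0")
    case True
    then have "U * a + U * b - (r + U * q) = 0 + U * (a + b - q)"
      by (simp add: diff_mult_distrib2 distrib_left)
    then show ?thesis
      using True lucas[OF \<open>m mod U < U\<close> \<open>0 < U\<close>] by simp
  next
    case False
    then have "U * q < U * (a + b)"
      using assms(5) unfolding U_def[symmetric] by (simp add: distrib_left)
    then obtain k where "a + b = q + 1 + k"
      using less_imp_Suc_add by fastforce
    then have "U * a + U * b = U + U * k + U * q"
      by (simp add: algebra_simps flip: distrib_left)
    then have "U * a + U * b - (r + U * q) = (U - r) + U * (a + b - q - 1)"
      using \<open>a + b = q + 1 + k\<close> \<open>r < U\<close> by simp
    moreover have "U - r < U"
      using False \<open>0 < U\<close> by simp
    ultimately show ?thesis
      using False lucas[OF \<open>m mod U < U\<close>] by simp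
  qed
  finally show ?thesis
    unfolding U_def .
qed

lemma of_nat_sc_coef_blocks:
  assumes "CHAR('a::semiring_1) = p" "prime p" "r < p ^ u"
  shows "(of_nat (sc_coef m (p ^ u * a) (p ^ u * b) (r + p ^ u * q)) :: 'a) =
    of_nat (q choose a) * of_nat (q choose b) *
    (if r = 0 then
       (if q \<le> a + b then of_nat ((m div p ^ u + a + b) choose (a + b - q)) else 0)
     else if q < a + b then
       of_nat (m mod p ^ u choose (p ^ u - r)) * of_nat ((m div p ^ u + a + b) choose (a + b - q - 1))
     else 0)"
    (is "?lhs = ?rhs")
proof (cases "max (p ^ u * a) (p ^ u * b) \<le> r + p ^ u * q \<and> r + p ^ u * q \<le> p ^ u * a + p ^ u * b")
  case True
  have "0 < p ^ u"
    using prime_gt_0_nat[OF assms(2)] by simp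
  moreover have "p ^ u * q \<le> p ^ u * (a + b)" "r \<noteq> 0 \<Longrightarrow> p ^ u * q < p ^ u * (a + b)"
    using True by (simp_all add: distrib_left)
  ultimately have "q \<le> a + b" "r \<noteq> 0 \<Longrightarrow> q < a + b"
    by simp_all
  then show ?thesis
    using of_nat_sc_coef_blocks_in_range[OF assms] True by auto
next
  case False
  then consider "r + p ^ u * q < p ^ u * a" | "r + p ^ u * q < p ^ u * b"
    | "p ^ u * (a + b) < r + p ^ u * q"
    by (auto simp: distrib_left)
  then have "?rhs = 0"
  proof cases
    case 1
    then have "q < a"
      by (metis add_lessD1 add.commute nat_mult_less_cancel_disj)
    then show ?thesis
      by (simp add: binomial_eq_0)
  next
    case 2
    then have "q < b"
      by (metis add_lessD1 add.commute nat_mult_less_cancel_disj)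
    then show ?thesis
      by (simp add: binomial_eq_0)
  next
    case 3
    have "a + b \<le> q"
    proof (rule ccontr)
      assume "\<not> a + b \<le> q"
      then have "p ^ u * (q + 1) \<le> p ^ u * (a + b)"
        by (intro mult_le_mono2) simp
      then show False
        using 3 assms(3) by (simp add: algebra_simps)
    qed
    moreover have "r = 0 \<Longrightarrow> a + b < q"
      using 3 by simp
    ultimately show ?thesis
      by auto
  qed
  moreover have "sc_coef m (p ^ u * a) (p ^ u * b) (r + p ^ u * q) = 0"
    using False unfolding sc_coef_def by auto
  ultimately show ?thesis
    by simp
qed

lemma add_mult_eq_add_mult_iff:
  fixes n :: nat
  assumes "r < n" "s < n"
  shows "r + n * q = s + n * k \<longleftrightarrow> r = s \<and> q = k"
proof
  assume eq: "r + n * q = s + n * k"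
  have "r = s"
    using arg_cong[OF eq, of "\<lambda>x. x mod n"] assms by simp
  moreover have "q = k"
    using arg_cong[OF eq, of "\<lambda>x. x div n"] assms by simp
  ultimately show "r = s \<and> q = k" ..
qed simp

lemma ext_mod_div:
  fixes f g :: "nat \<Rightarrow> 'b"
  assumes "0 < n" "\<And>q r. r < n \<Longrightarrow> f (r + n * q) = g (r + n * q)"
  shows "f = g"
proof
  fix h
  show "f h = g h"
    using assms(2)[of "h mod n" "h div n"] assms(1) by simp
qed

lemma sb_mod_div:
  assumes "r < n" "n * k \<le> l2"
  shows "(sb l2 (n * k) (r + n * q) :: 'a::field) = (if r = 0 \<and> q = k then 1 else 0)"
  using add_mult_eq_add_mult_iff[OF assms(1), of 0 q k] assms by (auto simp: sb_def)

lemma smul_sb_left: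
  assumes "a \<le> l2"
  shows "smul m l2 (sb l2 a) y h =
    (if h \<le> l2 then (\<Sum>j\<le>l2. y j * of_nat (sc_coef m a j h)) else (0::'a::field))"
proof -
  have "(\<Sum>i\<le>l2. \<Sum>j\<le>l2. sb l2 a i * y j * (of_nat (sc_coef m i j h) :: 'a)) =
      (\<Sum>i\<le>l2. if i = a then (\<Sum>j\<le>l2. y j * of_nat (sc_coef m a j h)) else 0)"
    by (rule sum.cong) (auto simp: sb_def assms)
  then show ?thesis
    using assms unfolding smul_def by simp
qed

lemma smul_sb_sb:
  assumes "a \<le> l2" "b \<le> l2"
  shows "smul m l2 (sb l2 a) (sb l2 b) h =
    (if h \<le> l2 then of_nat (sc_coef m a b h) else (0::'a::field))"
proof -
  have "(\<Sum>j\<le>l2. (sb l2 b j :: 'a) * of_nat (sc_coef m a j h)) =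
      (\<Sum>j\<le>l2. if j = b then of_nat (sc_coef m a b h) else 0)"
    by (rule sum.cong) (auto simp: sb_def)
  then show ?thesis
    using assms by (simp add: smul_sb_left)
qed

lemma psi_apply:
  assumes "3 ^ u \<le> l2"
  shows "(psi m u l2 j :: 'a::field) =
    (if 0 < j \<and> j < 3 ^ u then of_nat (mlow m u choose (3 ^ u - j)) else 0)"
proof -
  have "(psi m u l2 j :: 'a) =
      (\<Sum>t\<in>{1..3 ^ u - 1}. if j = t then of_nat (mlow m u choose (3 ^ u - t)) else 0)"
    unfolding psi_def by (rule sum.cong) (use assms in \<open>auto simp: sb_def\<close>)
  then show ?thesis
    by (auto simp: sum.delta)
qed

lemma smul_sb_one_plus_psi:
  assumes "CHAR('a::field) = 3" "3 ^ u * k \<le> l2" "3 ^ u \<le> l2" "r < 3 ^ u"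
  shows "smul m l2 (sb l2 (3 ^ u * k)) (\<lambda>j. c * sone l2 j + d * psi m u l2 j) (r + 3 ^ u * q) =
    (if r + 3 ^ u * q \<le> l2 \<and> q = k then
       (if r = 0 then c else d * of_nat (mlow m u choose (3 ^ u - r)))
     else (0::'a))"
proof -
  define y where "y = (\<lambda>j. c * sone l2 j + d * (psi m u l2 j :: 'a))"
  have y: "y j = (if j = 0 then c else if j < 3 ^ u then d * of_nat (mlow m u choose (3 ^ u - j)) else 0)" for j
    using assms(3) by (simp add: y_def psi_apply sone_def sb_def)
  have "(\<Sum>j\<le>l2. y j * of_nat (sc_coef m (3 ^ u * k) j (r + 3 ^ u * q))) =
      (\<Sum>j<3 ^ u. y j * of_nat (sc_coef m (3 ^ u * k) j (r + 3 ^ u * q)))"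
    by (rule sum.mono_neutral_right) (use assms(3) in \<open>auto simp: y\<close>)
  also have "\<dots> = (\<Sum>j<3 ^ u. if j = r \<and> q = k then y j else 0)"
  proof (rule sum.cong)
    fix j :: nat assume "j \<in> {..<3 ^ u}"
    then have "r + 3 ^ u * q = 3 ^ u * k + j \<longleftrightarrow> j = r \<and> q = k"
      using add_mult_eq_add_mult_iff[OF assms(4), of j q k] by auto
    with \<open>j \<in> {..<3 ^ u}\<close>
    show "y j * of_nat (sc_coef m (3 ^ u * k) j (r + 3 ^ u * q)) = (if j = r \<and> q = k then y j else 0)"
      by (simp add: of_nat_sc_coef_low[OF assms(1)])
  qed simp
  also have "\<dots> = (if q = k then y r else 0)"
    using assms(4) by (simp add: sum.delta)
  finally have sum: "(\<Sum>j\<le>l2. y j * of_nat (sc_coef m (3 ^ u * k) j (r + 3 ^ u * q))) =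
      (if q = k then y r else 0)" .
  show ?thesis
    unfolding y_def[symmetric] smul_sb_left[OF assms(2)] sum using y[of r] assms(4) by auto
qed

lemma smul_sb_sb_mod_div:
  assumes "CHAR('a::field) = p" "prime p" "r < p ^ u" "p ^ u * a \<le> l2" "p ^ u * b \<le> l2"
  shows "smul m l2 (sb l2 (p ^ u * a)) (sb l2 (p ^ u * b)) (r + p ^ u * q) =
    (if r + p ^ u * q \<le> l2 then
      of_nat (q choose a) * of_nat (q choose b) *
      (if r = 0 then
         (if q \<le> a + b then of_nat ((m div p ^ u + a + b) choose (a + b - q)) else 0)
       else if q < a + b then
         of_nat (m mod p ^ u choose (p ^ u - r)) * of_nat ((m div p ^ u + a + b) choose (a + b - q - 1))
       else 0)
     else (0::'a))"
  unfolding smul_sb_sb[OF assms(4,5)] of_nat_sc_coef_blocks[OF assms(1-3)] ..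

lemma of_nat_digit3:
  assumes "CHAR('a::semiring_1) = 3"
  shows "(of_nat (digit3 m u) :: 'a) = of_nat (m div 3 ^ u)"
  using of_nat_mod_CHAR[of "m div 3 ^ u", where 'a='a] assms by (simp add: digit3_def)

lemma sb_pow3_square:
  assumes "CHAR('a::field) = 3" "2 * 3 ^ u \<le> l2"
  shows "smul m l2 (sb l2 (3 ^ u)) (sb l2 (3 ^ u)) =
    sadd (smul m l2 (sb l2 (3 ^ u)) (sadd (ssmult (of_nat (digit3 m u + 2)) (sone l2)) (psi m u l2)))
      (sb l2 (2 * 3 ^ u) :: nat \<Rightarrow> 'a)"
    (is "?L = ?R")
proof (rule ext_mod_div[of "3 ^ u"])
  fix q r :: nat
  assume r: "r < 3 ^ u"
  let ?h = "r + 3 ^ u * q"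
  have B1: "sb l2 (3 ^ u) = sb l2 (3 ^ u * 1)" and B2: "sb l2 (2 * 3 ^ u) = sb l2 (3 ^ u * 2)"
    by (simp_all add: mult.commute)
  have prime3: "prime (3::nat)"
    by simp
  have le: "3 ^ u * 1 \<le> l2" "3 ^ u \<le> l2" "3 ^ u * 2 \<le> l2"
    using assms(2) by simp_all
  have y: "sadd (ssmult c (sone l2)) (psi m u l2) = (\<lambda>j. c * sone l2 j + 1 * psi m u l2 j)" for c :: 'a
    by (simp add: sadd_def ssmult_def)
  have lhs: "?L ?h = (if ?h \<le> l2 then
      of_nat (q choose 1) * of_nat (q choose 1) *
      (if r = 0 then (if q \<le> 2 then of_nat ((m div 3 ^ u + 2) choose (2 - q)) else 0)
       else if q < 2 then of_nat (m mod 3 ^ u choose (3 ^ u - r)) * of_nat ((m div 3 ^ u + 2) choose (1 - q))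
       else 0) else 0)"
  proof -
    have "m div 3 ^ u + 1 + 1 = m div 3 ^ u + 2" "(1::nat) + 1 = 2" "(2::nat) - q - 1 = 1 - q"
      by simp_all
    then show ?thesis
      unfolding B1 smul_sb_sb_mod_div[OF assms(1) prime3 r le(1,1)] by (simp only:)
  qed
  have rhs: "?R ?h = (if ?h \<le> l2 \<and> q = 1 then
        (if r = 0 then of_nat (digit3 m u + 2) else 1 * of_nat (mlow m u choose (3 ^ u - r)))
        else 0) + (if r = 0 \<and> q = 2 then 1 else (0::'a))"
    unfolding y sadd_def[of "smul m l2 _ _"] B1 B2 smul_sb_one_plus_psi[OF assms(1) le(1,2) r]
      sb_mod_div[OF r le(3)] ..
  have four: "(4::'a) = 1"
    using of_nat_mod_CHAR[of 4, where 'a='a] assms(1) by simp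
  consider "q = 0" | "q = 1" | "q = 2" | "2 < q"
    by linarith
  then show "?L ?h = ?R ?h"
    unfolding lhs rhs by cases (use le(3) in \<open>auto simp: of_nat_digit3[OF assms(1)] four mlow_def\<close>)
qed simp

lemma sb_twice_pow3_square:
  assumes "CHAR('a::field) = 3" "2 * 3 ^ u \<le> l2"
  shows "smul m l2 (sb l2 (2 * 3 ^ u)) (sb l2 (2 * 3 ^ u)) =
    smul m l2 (sb l2 (2 * 3 ^ u))
      (sadd (ssmult (of_nat ((digit3 m u + 1) choose 2)) (sone l2))
            (ssmult (of_nat (digit3 m u + 1)) (psi m u l2)) :: nat \<Rightarrow> 'a)"
    (is "?L = ?R")
proof (rule ext_mod_div[of "3 ^ u"])
  fix q r :: nat
  assume r: "r < 3 ^ u"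
  let ?h = "r + 3 ^ u * q"
  have prime3: "prime (3::nat)"
    by simp
  have B2: "sb l2 (2 * 3 ^ u) = sb l2 (3 ^ u * 2)"
    by (simp add: mult.commute)
  have le: "3 ^ u * 2 \<le> l2" "3 ^ u \<le> l2"
    using assms(2) by simp_all
  have y: "sadd (ssmult c (sone l2)) (ssmult d (psi m u l2)) = (\<lambda>j. c * sone l2 j + d * psi m u l2 j)"
    for c d :: 'a
    by (simp add: sadd_def ssmult_def)
  have lhs: "?L ?h = (if ?h \<le> l2 then
      of_nat (q choose 2) * of_nat (q choose 2) *
      (if r = 0 then (if q \<le> 4 then of_nat ((m div 3 ^ u + 4) choose (4 - q)) else 0)
       else if q < 4 then of_nat (m mod 3 ^ u choose (3 ^ u - r)) * of_nat ((m div 3 ^ u + 4) choose (3 - q))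
       else 0) else 0)"
  proof -
    have "m div 3 ^ u + 2 + 2 = m div 3 ^ u + 4" "(2::nat) + 2 = 4" "(4::nat) - q - 1 = 3 - q"
      by simp_all
    then show ?thesis
      unfolding B2 smul_sb_sb_mod_div[OF assms(1) prime3 r le(1,1)] by (simp only:)
  qed
  have rhs: "?R ?h = (if ?h \<le> l2 \<and> q = 2 then
        (if r = 0 then of_nat ((digit3 m u + 1) choose 2)
         else of_nat (digit3 m u + 1) * of_nat (mlow m u choose (3 ^ u - r)))
        else 0)"
    unfolding y B2 smul_sb_one_plus_psi[OF assms(1) le r] ..
  have four: "(4::'a) = 1"
    using of_nat_mod_CHAR[of 4, where 'a='a] assms(1) by simp
  have "(n + 4) mod 3 = (n mod 3 + 1) mod 3" for n :: nat
    by presburger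
  then have "(m div 3 ^ u + 4) mod 3 = (digit3 m u + 1) mod 3"
    unfolding digit3_def .
  have choose2: "(of_nat ((m div 3 ^ u + 4) choose 2) :: 'a) = of_nat ((digit3 m u + 1) choose 2)"
  proof -
    have "(of_nat ((m div 3 ^ u + 4) choose 2) :: 'a) = of_nat ((m div 3 ^ u + 4) mod 3 choose 2)"
      by (rule of_nat_choose_mod_CHAR[OF assms(1) prime3]) simp
    also have "\<dots> = of_nat ((digit3 m u + 1) mod 3 choose 2)"
      using \<open>(m div 3 ^ u + 4) mod 3 = (digit3 m u + 1) mod 3\<close> by simp
    also have "\<dots> = of_nat ((digit3 m u + 1) choose 2)"
      by (rule of_nat_choose_mod_CHAR[OF assms(1) prime3, symmetric]) simp
    finally show ?thesis .
  qed
  have vanish: "(of_nat (q choose 2) :: 'a) = 0" if "3 \<le> q" "q \<le> 4"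
  proof -
    have "q = 3 \<or> q = 4"
      using that by linarith
    then have "q mod 3 < 2"
      by auto
    then show ?thesis
      using of_nat_choose_mod_CHAR[OF assms(1) prime3, of 2 q] by (simp add: binomial_eq_0)
  qed
  consider "q < 2" | "q = 2" | "3 \<le> q \<and> q \<le> 4" | "4 < q"
    by linarith
  then show "?L ?h = ?R ?h"
  proof cases
    case 1
    then show ?thesis
      unfolding lhs rhs by (simp add: binomial_eq_0)
  next
    case 2
    then show ?thesis
      unfolding lhs rhs by (simp add: of_nat_digit3[OF assms(1)] four choose2 mlow_def)
  next
    case 3
    then show ?thesis
      unfolding lhs rhs by (simp add: vanish)
  next
    case 4
    then show ?thesis
      unfolding lhs rhs by simp
  qed
qed simp

lemma sb_pow3_mult_twice_pow3:
  assumes "CHAR('a::field) = 3" "2 * 3 ^ u \<le> l2"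
  shows "smul m l2 (sb l2 (3 ^ u)) (sb l2 (2 * 3 ^ u)) =
    smul m l2 (sb l2 (2 * 3 ^ u))
      (ssub (ssmult (2 * of_nat (digit3 m u)) (sone l2)) (psi m u l2) :: nat \<Rightarrow> 'a)"
    (is "?L = ?R")
proof (rule ext_mod_div[of "3 ^ u"])
  fix q r :: nat
  assume r: "r < 3 ^ u"
  let ?h = "r + 3 ^ u * q"
  have prime3: "prime (3::nat)"
    by simp
  have B1: "sb l2 (3 ^ u) = sb l2 (3 ^ u * 1)" and B2: "sb l2 (2 * 3 ^ u) = sb l2 (3 ^ u * 2)"
    by (simp_all add: mult.commute)
  have le: "3 ^ u * 1 \<le> l2" "3 ^ u * 2 \<le> l2" "3 ^ u \<le> l2"
    using assms(2) by simp_all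
  have y: "ssub (ssmult c (sone l2)) (psi m u l2) = (\<lambda>j. c * sone l2 j + (- 1) * psi m u l2 j)"
    for c :: 'a
    by (simp add: ssub_def ssmult_def)
  have lhs: "?L ?h = (if ?h \<le> l2 then
      of_nat (q choose 1) * of_nat (q choose 2) *
      (if r = 0 then (if q \<le> 3 then of_nat ((m div 3 ^ u + 3) choose (3 - q)) else 0)
       else if q < 3 then of_nat (m mod 3 ^ u choose (3 ^ u - r)) * of_nat ((m div 3 ^ u + 3) choose (2 - q))
       else 0) else 0)"
  proof -
    have "m div 3 ^ u + 1 + 2 = m div 3 ^ u + 3" "(1::nat) + 2 = 3" "(3::nat) - q - 1 = 2 - q"
      by simp_all
    then show ?thesis
      unfolding B1 B2 smul_sb_sb_mod_div[OF assms(1) prime3 r le(1,2)] by (simp only:)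
  qed
  have rhs: "?R ?h = (if ?h \<le> l2 \<and> q = 2 then
        (if r = 0 then 2 * of_nat (digit3 m u) else - 1 * of_nat (mlow m u choose (3 ^ u - r)))
        else 0)"
    unfolding y B2 smul_sb_one_plus_psi[OF assms(1) le(2,3) r] ..
  have three: "(3::'a) = 0" and two: "(2::'a) = - 1"
    using of_nat_mod_CHAR[of 3, where 'a='a] assms(1) by (simp_all add: eq_neg_iff_add_eq_0)
  consider "q < 2" | "q = 2" | "q = 3" | "3 < q"
    by linarith
  then show "?L ?h = ?R ?h"
  proof cases
    case 1
    then show ?thesis
      unfolding lhs rhs by (simp add: binomial_eq_0)
  next
    case 2
    then show ?thesis
      unfolding lhs rhs by (simp add: of_nat_digit3[OF assms(1)] three two mlow_def)
  next
    case 3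
    then show ?thesis
      unfolding lhs rhs by (simp add: three)
  next
    case 4
    then show ?thesis
      unfolding lhs rhs by simp
  qed
qed simp

theorem mainTheorem5:
  fixes lam1 lam2 u :: nat
  assumes char3: "CHAR('a::field) = 3"
    and part: "lam2 \<le> lam1"
    and big: "lam2 \<ge> 2 * 3 ^ u"
  defines "m \<equiv> lam1 - lam2"
  defines "mu \<equiv> digit3 m u"
  defines "B1 \<equiv> (sb lam2 (3 ^ u) :: nat \<Rightarrow> 'a)"
  defines "B2 \<equiv> (sb lam2 (2 * 3 ^ u) :: nat \<Rightarrow> 'a)"
  defines "P \<equiv> (psi m u lam2 :: nat \<Rightarrow> 'a)"
  defines "one \<equiv> (sone lam2 :: nat \<Rightarrow> 'a)"
  shows
    "smul m lam2 B1 B1 =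
       sadd (smul m lam2 B1 (sadd (ssmult (of_nat ((mu + 2) choose 1)) one) P)) B2 \<and>
     smul m lam2 B2 B2 =
       smul m lam2 B2 (sadd (ssmult (of_nat ((mu + 1) choose 2)) one)
                            (ssmult (of_nat ((mu + 1) choose 1)) P)) \<and>
     smul m lam2 B1 B2 =
       smul m lam2 B2 (ssub (ssmult (2 * of_nat (mu choose 1)) one) P)"
  using sb_pow3_square[OF char3 big, of m] sb_twice_pow3_square[OF char3 big, of m]
    sb_pow3_mult_twice_pow3[OF char3 big, of m]
  unfolding mu_def B1_def B2_def P_def one_def by simp

end
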